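(* Let $1<p<2<r<\infty$ with $r'<p$, where $q'=q/(q-1)$. Let $(k_n)$ be a sequence of positive integers such that for all $n\ge1$ \[1+2\sum_{i=1}^{n-1}i^{r/2}k_i^{r/2}\le k_n^{1-p/2}\big/n^{p/2}\quad\text{and}\quad\Big(\frac{n+1}{n}\Big)^{r/2}\Big(\frac{k_n}{k_{n+1}}\Big)^{(1/p-1/p')r/2}\le\frac12,\] and put $\alpha_n=\sqrt n\,k_n^{(1/p'-1/p)/2}$. Then for all $l,j\in\mathbb N$ with \[2\sum_{i=1}^{l-1}i^{r/2}k_i^{r/2}\le j\le k_l^{1-p/2}\big/l^{p/2},\] and all real $x_1,\dots,x_l$ with $0\le x_i\le k_i$ for $1\le i<l$ and $0\le x_l\le j-\sum_{i=1}^{l-1}x_i$, we have \[0\le\sum_{i=1}^l\alpha_i^r x_i^{r/p}\le\frac j2+2.\] *)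

theory Defs
  imports Complex_Main
begin

definition conj_exp :: "real \<Rightarrow> real" where
  "conj_exp q = q / (q - 1)"

end

theory Submission
  imports Defs
begin

text \<open>
  Since \<open>1/p' - 1/p = 1 - 2/p\<close>, the weight is \<open>\<alpha>\<^sub>i\<^sup>r = i\<^bsup>r/2\<^esup> k\<^sub>i\<^bsup>r/2 - r/p\<^esup>\<close>.
  For \<open>i < l\<close> the constraint \<open>x\<^sub>i \<le> k\<^sub>i\<close> gives \<open>\<alpha>\<^sub>i\<^sup>r x\<^sub>i\<^bsup>r/p\<^esup> \<le> i\<^bsup>r/2\<^esup> k\<^sub>i\<^bsup>r/2\<^esup>\<close>,
  so these terms sum to at most \<open>j/2\<close> by the lower bound on \<open>j\<close>. For the last term,
  \<open>x\<^sub>l \<le> j \<le> k\<^sub>l\<^bsup>1-p/2\<^esup> / l\<^bsup>p/2\<^esup>\<close>, and raising this to the power \<open>r/p\<close> exactly cancels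
  \<open>\<alpha>\<^sub>l\<^sup>r\<close>, so the last term is at most 1.
\<close>

lemma inverse_conj_exp:
  assumes "q \<noteq> 0"
  shows "1 / conj_exp q = 1 - 1 / q"
  using assms by (simp add: conj_exp_def field_simps)

lemma sqrt_mult_powr_conj_exp_powr:
  fixes p r y z :: real
  assumes "p \<noteq> 0" "0 \<le> y"
  shows "(sqrt y * z powr ((1/conj_exp p - 1/p)/2)) powr r = y powr (r/2) * z powr (r/2 - r/p)"
proof -
  have exponent: "(1/conj_exp p - 1/p) * r / 2 = r/2 - r/p"
    using assms(1) by (simp add: inverse_conj_exp field_simps)
  have "sqrt y = y powr (1/2)"
    using assms(2) by (simp add: powr_half_sqrt)
  then show ?thesis
    by (simp add: powr_mult powr_powr exponent)
qed

lemma powr_diff_mult_powr_le: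
  fixes x z a b :: real
  assumes "0 \<le> b" "0 \<le> x" "x \<le> z"
  shows "z powr (a - b) * x powr b \<le> z powr a"
proof -
  have "z powr (a - b) * x powr b \<le> z powr (a - b) * z powr b"
    using assms by (intro mult_left_mono powr_mono2) auto
  also have "\<dots> = z powr a"
    by (simp flip: powr_add)
  finally show ?thesis .
qed

lemma powr_mult_powr_le_one:
  fixes x y z p r :: real
  assumes "0 < p" "0 \<le> r" "0 < y" "0 < z"
    and "0 \<le> x" "x \<le> z powr (1 - p/2) / y powr (p/2)"
  shows "y powr (r/2) * z powr (r/2 - r/p) * x powr (r/p) \<le> 1"
proof -
  have "x powr (r/p) \<le> (z powr (1 - p/2) / y powr (p/2)) powr (r/p)"
    using assms by (intro powr_mono2) auto
  also have "\<dots> = z powr (r/p - r/2) / y powr (r/2)"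
    using assms(1) by (simp add: powr_divide powr_powr field_simps)
  finally have "y powr (r/2) * z powr (r/2 - r/p) * x powr (r/p)
      \<le> y powr (r/2) * z powr (r/2 - r/p) * (z powr (r/p - r/2) / y powr (r/2))"
    by (intro mult_left_mono) auto
  also have "\<dots> = z powr (r/2 - r/p) * z powr (r/p - r/2)"
    using assms(3) by simp
  also have "\<dots> = 1"
    using assms(4) by (simp flip: powr_add)
  finally show ?thesis .
qed

theorem lemma7:
  fixes p r :: real and k :: "nat \<Rightarrow> nat" and l j :: nat and x :: "nat \<Rightarrow> real"
  assumes hp: "1 < p" "p < 2" and hr: "2 < r" and hrp: "conj_exp r < p"
    and kpos: "\<And>n. n \<ge> 1 \<Longrightarrow> k n > 0"
    and k1: "\<And>n. n \<ge> 1 \<Longrightarrow>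
       1 + 2 * (\<Sum>i\<in>{1..<n}. real i powr (r/2) * real (k i) powr (r/2))
         \<le> real (k n) powr (1 - p/2) / real n powr (p/2)"
    and k2: "\<And>n. n \<ge> 1 \<Longrightarrow>
       ((real n + 1) / real n) powr (r/2)
         * (real (k n) / real (k (n+1))) powr ((1/p - 1/conj_exp p) * r / 2) \<le> 1/2"
    and hl: "l \<ge> 1"
    and hj1: "2 * (\<Sum>i\<in>{1..<l}. real i powr (r/2) * real (k i) powr (r/2)) \<le> real j"
    and hj2: "real j \<le> real (k l) powr (1 - p/2) / real l powr (p/2)"
    and hx: "\<And>i. 1 \<le> i \<Longrightarrow> i < l \<Longrightarrow> 0 \<le> x i \<and> x i \<le> real (k i)"
    and hxl: "0 \<le> x l" "x l \<le> real j - (\<Sum>i\<in>{1..<l}. x i)"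
  shows "0 \<le> (\<Sum>i\<in>{1..l}. (sqrt (real i) * real (k i) powr ((1/conj_exp p - 1/p)/2)) powr r
                 * x i powr (r/p))
       \<and> (\<Sum>i\<in>{1..l}. (sqrt (real i) * real (k i) powr ((1/conj_exp p - 1/p)/2)) powr r
                 * x i powr (r/p)) \<le> real j / 2 + 2"
proof -
  define T where "T i = (sqrt (real i) * real (k i) powr ((1/conj_exp p - 1/p)/2)) powr r
                 * x i powr (r/p)" for i
  have T_eq: "T i = real i powr (r/2) * (real (k i) powr (r/2 - r/p) * x i powr (r/p))" for i
    unfolding T_def using hp by (simp add: sqrt_mult_powr_conj_exp_powr mult.assoc)
  have "T i \<le> real i powr (r/2) * real (k i) powr (r/2)" if "1 \<le> i" "i < l" for i
    unfolding T_eq using hx[OF that] hp hr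
    by (intro mult_left_mono powr_diff_mult_powr_le) auto
  then have "(\<Sum>i\<in>{1..<l}. T i) \<le> (\<Sum>i\<in>{1..<l}. real i powr (r/2) * real (k i) powr (r/2))"
    by (intro sum_mono) auto
  then have head: "(\<Sum>i\<in>{1..<l}. T i) \<le> real j / 2"
    using hj1 by linarith
  have "0 \<le> (\<Sum>i\<in>{1..<l}. x i)"
    using hx by (intro sum_nonneg) auto
  then have "x l \<le> real j"
    using hxl by linarith
  then have last: "T l \<le> 1"
    unfolding T_eq mult.assoc[symmetric] using hp hr hl kpos[OF hl] hxl(1) hj2
    by (intro powr_mult_powr_le_one) auto
  have "{1..l} = insert l {1..<l}"
    using hl by auto
  then have "(\<Sum>i\<in>{1..l}. T i) = T l + (\<Sum>i\<in>{1..<l}. T i)"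
    by simp
  moreover have "0 \<le> (\<Sum>i\<in>{1..l}. T i)"
    unfolding T_def by (intro sum_nonneg) simp
  ultimately show ?thesis
    using head last unfolding T_def by linarith
qed

end
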